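(* Let $\mathcal{A}$ be a UFA with $n \ge 0$ states. Then its forward determinization has at most $\sqrt{n+1}\cdot 2^{n/2}$ states or its backward determinization has at most $\sqrt{n+1}\cdot 2^{n/2}$ states.
   Context: An NFA is a quintuple $\mathcal{A} = (Q,\Sigma,\delta,I,F)$ with $Q$ finite set of states, $\Sigma$ finite alphabet, $\delta \subseteq Q\times\Sigma\times Q$, initial states $I\subseteq Q$, accepting states $F \subseteq Q$. Write $q \xrightarrow{w} r$ if there is a run (sequence of transitions) from $q$ to $r$ reading $w$. A UFA is an NFA in which every word has at most one accepting run (run starting in $I$ and ending in $F$). For $S\subseteq Q$ and $w\in\Sigma^*$, $\delta(S,w) = \{r \mid \exists q\in S.\ q\xrightarrow{w} r\}$ and $\delta^{-1}(w,S) = \{r \mid \exists q \in S.\ r \xrightarrow{w} q\}$. The forward determinization of $\mathcal{A}$ has state set $\{\delta(I,w) \mid w\in\Sigma^*\}$ (the standard subset construction restricted to reachable subsets); the backward determinization has state set $\{\delta^{-1}(w,F)\mid w \in\Sigma^*\}$. *)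

theory Defs
  imports Complex_Main
begin

record ('q, 'a) nfa =
  states :: "'q set"
  alphabet :: "'a set"
  trans :: "('q \<times> 'a \<times> 'q) set"
  init :: "'q set"
  final :: "'q set"

definition wf_nfa :: "('q, 'a) nfa \<Rightarrow> bool" where
  "wf_nfa A \<longleftrightarrow> finite (states A) \<and> finite (alphabet A)
     \<and> trans A \<subseteq> states A \<times> alphabet A \<times> states A
     \<and> init A \<subseteq> states A \<and> final A \<subseteq> states A"

definition is_run :: "('q, 'a) nfa \<Rightarrow> 'q list \<Rightarrow> 'a list \<Rightarrow> bool" where
  "is_run A qs w \<longleftrightarrow> length qs = Suc (length w)
     \<and> (\<forall>i < length w. (qs ! i, w ! i, qs ! Suc i) \<in> trans A)"

definition accepting_run :: "('q, 'a) nfa \<Rightarrow> 'q list \<Rightarrow> 'a list \<Rightarrow> bool" where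
  "accepting_run A qs w \<longleftrightarrow> is_run A qs w \<and> hd qs \<in> init A \<and> last qs \<in> final A"

definition is_ufa :: "('q, 'a) nfa \<Rightarrow> bool" where
  "is_ufa A \<longleftrightarrow> wf_nfa A \<and>
     (\<forall>w \<in> lists (alphabet A). \<forall>qs rs. accepting_run A qs w \<and> accepting_run A rs w \<longrightarrow> qs = rs)"

definition reach :: "('q, 'a) nfa \<Rightarrow> 'q \<Rightarrow> 'a list \<Rightarrow> 'q \<Rightarrow> bool" where
  "reach A q w r \<longleftrightarrow> (\<exists>qs. is_run A qs w \<and> hd qs = q \<and> last qs = r)"

definition delta_set :: "('q, 'a) nfa \<Rightarrow> 'q set \<Rightarrow> 'a list \<Rightarrow> 'q set" where
  "delta_set A S w = {r. \<exists>q \<in> S. reach A q w r}"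

definition delta_inv :: "('q, 'a) nfa \<Rightarrow> 'a list \<Rightarrow> 'q set \<Rightarrow> 'q set" where
  "delta_inv A w S = {r. \<exists>q \<in> S. reach A r w q}"

definition fwd_det_states :: "('q, 'a) nfa \<Rightarrow> 'q set set" where
  "fwd_det_states A = {delta_set A (init A) w | w. w \<in> lists (alphabet A)}"

definition bwd_det_states :: "('q, 'a) nfa \<Rightarrow> 'q set set" where
  "bwd_det_states A = {delta_inv A w (final A) | w. w \<in> lists (alphabet A)}"

end

theory Submission
  imports Defs
begin

text \<open>If u leads from an initial state to q and v leads from q to a final state, then some
  accepting run on uv visits q after reading u. By unambiguity this run is unique, so a forward
  subset \<delta>(I, u) and a backward subset \<delta>^-1(v, F) share at most one state. It then suffices
  to show that two families \<F>, \<G> of subsets of an n-element set with |X \<inter> Y| \<le> 1 for all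
  X \<in> \<F>, Y \<in> \<G> satisfy |\<F>| |\<G>| \<le> (n + 1) 2^n, since then one of the two factors is at most
  sqrt((n + 1) 2^n). This bound and its variant |\<F>| |\<G>| \<le> 2^n for cross-disjoint families
  follow by induction on n: deleting an element e from all members of \<F> loses exactly the
  twins, the sets X with e \<notin> X and X, X \<union> {e} \<in> \<F>, and the twins of \<F> and of \<G> are
  cross-disjoint.\<close>

definition twins :: "'a \<Rightarrow> 'a set set \<Rightarrow> 'a set set" where
  "twins e F = {X \<in> F. e \<notin> X \<and> insert e X \<in> F}"

lemma card_eq_card_Diff_image_plus_twins:
  assumes "finite F"
  shows "card F = card ((\<lambda>X. X - {e}) ` F) + card (twins e F)"
proof -
  define F0 where "F0 = {X \<in> F. e \<notin> X}"
  define F1 where "F1 = {X \<in> F. e \<in> X}"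
  have fin: "finite F0" "finite F1" using assms by (auto simp: F0_def F1_def)
  have "F = F0 \<union> F1" "F0 \<inter> F1 = {}" by (auto simp: F0_def F1_def)
  then have "card F = card F0 + card F1"
    using card_Un_disjoint[OF fin] by simp
  also have "card F1 = card ((\<lambda>X. X - {e}) ` F1)"
    by (rule card_image[symmetric], rule inj_onI) (metis F1_def insert_Diff mem_Collect_eq)
  also have "card F0 + \<dots> = card (F0 \<union> (\<lambda>X. X - {e}) ` F1) + card (F0 \<inter> (\<lambda>X. X - {e}) ` F1)"
    using card_Un_Int fin by blast
  also have "F0 \<union> (\<lambda>X. X - {e}) ` F1 = (\<lambda>X. X - {e}) ` F"
  proof -
    have "F0 = (\<lambda>X. X - {e}) ` F0" by (force simp: F0_def)
    then show ?thesis using \<open>F = F0 \<union> F1\<close> by (metis image_Un)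
  qed
  also have "F0 \<inter> (\<lambda>X. X - {e}) ` F1 = twins e F"
  proof (intro set_eqI iffI)
    fix Z assume "Z \<in> F0 \<inter> (\<lambda>X. X - {e}) ` F1"
    then obtain X where "Z \<in> F" "e \<notin> Z" "X \<in> F" "e \<in> X" "Z = X - {e}"
      by (auto simp: F0_def F1_def)
    then show "Z \<in> twins e F" by (simp add: twins_def insert_absorb)
  next
    fix Z assume "Z \<in> twins e F"
    then have "Z \<in> F0" "insert e Z \<in> F1" "Z = insert e Z - {e}"
      by (auto simp: twins_def F0_def F1_def)
    then show "Z \<in> F0 \<inter> (\<lambda>X. X - {e}) ` F1" by blast
  qed
  finally show ?thesis .
qed

lemma twins_subset: "twins e F \<subseteq> (\<lambda>X. X - {e}) ` F"
  by (auto simp: twins_def image_iff)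

lemma card_mult_card_le_twins:
  assumes "finite F" "finite G"
  shows "card F * card G \<le> 2 * (card ((\<lambda>X. X - {e}) ` F) * card ((\<lambda>X. X - {e}) ` G)
                                  + card (twins e F) * card (twins e G))"
proof -
  have "card (twins e F) \<le> card ((\<lambda>X. X - {e}) ` F)" "card (twins e G) \<le> card ((\<lambda>X. X - {e}) ` G)"
    using assms by (simp_all add: card_mono twins_subset)
  then obtain a b where
    a: "card ((\<lambda>X. X - {e}) ` F) = card (twins e F) + a" and
    b: "card ((\<lambda>X. X - {e}) ` G) = card (twins e G) + b"
    using le_Suc_ex by blast
  have "card F * card G = (2 * card (twins e F) + a) * (2 * card (twins e G) + b)"
    using card_eq_card_Diff_image_plus_twins[OF assms(1), of e]
      card_eq_card_Diff_image_plus_twins[OF assms(2), of e] a b by (simp add: algebra_simps)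
  also have "\<dots> \<le> 2 * ((card (twins e F) + a) * (card (twins e G) + b) + card (twins e F) * card (twins e G))"
    by (simp add: algebra_simps)
  finally show ?thesis
    unfolding a b .
qed

lemma Diff_image_subset_Pow: "F \<subseteq> Pow (insert e S) \<Longrightarrow> (\<lambda>X. X - {e}) ` F \<subseteq> Pow S"
  by blast

lemma card_le_1_if_subset_Pow_empty: "F \<subseteq> Pow {} \<Longrightarrow> card F \<le> 1"
  using card_mono[of "{{}}" F] by auto

lemma card_mult_card_le_if_disjoint:
  assumes "finite S" "F \<subseteq> Pow S" "G \<subseteq> Pow S" "\<forall>X\<in>F. \<forall>Y\<in>G. X \<inter> Y = {}"
  shows "card F * card G \<le> 2 ^ card S"
  using assms
proof (induction S arbitrary: F G rule: finite_induct)
  case empty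
  then show ?case
    using mult_le_mono[OF empty.prems(1,2)[THEN card_le_1_if_subset_Pow_empty]] by simp
next
  case (insert e S)
  have fin: "finite F" "finite G"
    using finite_subset[OF insert.prems(1)] finite_subset[OF insert.prems(2)] insert.hyps by auto
  have "(\<lambda>X. X - {e}) ` F \<subseteq> Pow S" "(\<lambda>X. X - {e}) ` G \<subseteq> Pow S"
    using insert.prems(1,2) by (simp_all add: Diff_image_subset_Pow)
  moreover have "\<forall>X\<in>(\<lambda>X. X - {e}) ` F. \<forall>Y\<in>(\<lambda>X. X - {e}) ` G. X \<inter> Y = {}"
    using insert.prems(3) by auto
  ultimately have "card ((\<lambda>X. X - {e}) ` F) * card ((\<lambda>X. X - {e}) ` G) \<le> 2 ^ card S"
    by (rule insert.IH)
  moreover have "twins e F = {} \<or> twins e G = {}"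
  proof (rule ccontr)
    assume "\<not> ?thesis"
    then obtain X Y where "insert e X \<in> F" "insert e Y \<in> G"
      by (auto simp: twins_def)
    then show False
      using insert.prems(3) by (metis disjoint_iff insertI1)
  qed
  ultimately show ?case
    using card_mult_card_le_twins[OF fin, of e] insert.hyps by (auto simp del: card_Diff_insert)
qed

lemma card_mult_card_le_if_card_Int_le_1:
  assumes "finite S" "F \<subseteq> Pow S" "G \<subseteq> Pow S" "\<forall>X\<in>F. \<forall>Y\<in>G. card (X \<inter> Y) \<le> 1"
  shows "card F * card G \<le> (card S + 1) * 2 ^ card S"
  using assms
proof (induction S arbitrary: F G rule: finite_induct)
  case empty
  then have "\<forall>X\<in>F. \<forall>Y\<in>G. X \<inter> Y = {}"
    by blast
  then show ?case
    using card_mult_card_le_if_disjoint[of "{}" F G] empty.prems by simp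
next
  case (insert e S)
  have fin: "finite F" "finite G"
    using finite_subset[OF insert.prems(1)] finite_subset[OF insert.prems(2)] insert.hyps by auto
  have Diff_image: "(\<lambda>X. X - {e}) ` F \<subseteq> Pow S" "(\<lambda>X. X - {e}) ` G \<subseteq> Pow S"
    using insert.prems(1,2) by (simp_all add: Diff_image_subset_Pow)
  have fin_Int: "finite (X \<inter> Y)" if "X \<in> F" for X Y
    using that insert.prems(1) insert.hyps by (meson PowD finite_Int finite_insert rev_finite_subset subsetD)
  have card_Int: "card (X' \<inter> Y') \<le> 1" if "X \<in> F" "Y \<in> G" "X' \<inter> Y' \<subseteq> X \<inter> Y" for X Y X' Y'
  proof -
    have "card (X' \<inter> Y') \<le> card (X \<inter> Y)"
      using that(3) fin_Int[OF that(1)] by (rule card_mono[rotated])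
    also have "\<dots> \<le> 1"
      using insert.prems(3) that(1,2) by blast
    finally show ?thesis .
  qed
  have "\<forall>X'\<in>(\<lambda>X. X - {e}) ` F. \<forall>Y'\<in>(\<lambda>X. X - {e}) ` G. card (X' \<inter> Y') \<le> 1"
  proof (intro ballI)
    fix X' Y' assume "X' \<in> (\<lambda>X. X - {e}) ` F" "Y' \<in> (\<lambda>X. X - {e}) ` G"
    then obtain X Y where "X \<in> F" "Y \<in> G" "X' \<inter> Y' \<subseteq> X \<inter> Y"
      by blast
    then show "card (X' \<inter> Y') \<le> 1"
      by (rule card_Int)
  qed
  with Diff_image have "card ((\<lambda>X. X - {e}) ` F) * card ((\<lambda>X. X - {e}) ` G) \<le> (card S + 1) * 2 ^ card S"
    by (rule insert.IH)
  moreover have "card (twins e F) * card (twins e G) \<le> 2 ^ card S"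
  proof (rule card_mult_card_le_if_disjoint[OF insert.hyps(1)])
    show "twins e F \<subseteq> Pow S" "twins e G \<subseteq> Pow S"
      using Diff_image twins_subset by (metis subset_trans)+
    show "\<forall>X\<in>twins e F. \<forall>Y\<in>twins e G. X \<inter> Y = {}"
    proof (intro ballI)
      fix X Y assume "X \<in> twins e F" "Y \<in> twins e G"
      then have "insert e X \<in> F" "insert e Y \<in> G" "e \<notin> X" "finite (X \<inter> Y)"
        using fin_Int by (auto simp: twins_def)
      then show "X \<inter> Y = {}"
        using card_Int[of "insert e X" "insert e Y" "insert e X" "insert e Y"]
        by (simp add: card_insert_if)
    qed
  qed
  ultimately show ?case
    using card_mult_card_le_twins[OF fin, of e] insert.hyps by (simp add: algebra_simps)
qed

lemma is_run_hd_last: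
  assumes "is_run A qs w"
  shows "hd qs = qs ! 0" "last qs = qs ! length w"
proof -
  have "qs \<noteq> []" "length qs = Suc (length w)"
    using assms by (auto simp: is_run_def)
  then show "hd qs = qs ! 0" "last qs = qs ! length w"
    by (simp_all add: hd_conv_nth last_conv_nth)
qed

lemma reach_append:
  assumes "reach A p u q" "reach A q v r"
  shows "\<exists>ps. is_run A ps (u @ v) \<and> hd ps = p \<and> last ps = r \<and> ps ! length u = q"
proof -
  obtain qs where qs: "is_run A qs u" "hd qs = p" "last qs = q"
    using assms(1) by (auto simp: reach_def)
  obtain rs where rs: "is_run A rs v" "hd rs = q" "last rs = r"
    using assms(2) by (auto simp: reach_def)
  define ps where "ps = butlast qs @ rs"
  have len: "length (butlast qs) = length u" "length rs = Suc (length v)"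
    using qs(1) rs(1) by (simp_all add: is_run_def)
  have left: "ps ! i = qs ! i" if "i \<le> length u" for i
  proof (cases "i < length u")
    case True
    then show ?thesis
      using len by (simp add: ps_def nth_append nth_butlast)
  next
    case False
    then have "ps ! i = hd rs" "qs ! i = last qs"
      using that len is_run_hd_last[OF rs(1)] is_run_hd_last[OF qs(1)] by (simp_all add: ps_def nth_append)
    then show ?thesis
      using qs(3) rs(2) by simp
  qed
  have right: "ps ! (length u + j) = rs ! j" for j
    using len by (simp add: ps_def nth_append)
  have "is_run A ps (u @ v)"
    unfolding is_run_def
  proof (intro conjI allI impI)
    show "length ps = Suc (length (u @ v))"
      using len by (simp add: ps_def)
    fix i assume i: "i < length (u @ v)"
    show "(ps ! i, (u @ v) ! i, ps ! Suc i) \<in> trans A"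
    proof (cases "i < length u")
      case True
      then show ?thesis
        using qs(1) left[of i] left[of "Suc i"] by (simp add: is_run_def nth_append)
    next
      case False
      then obtain j where "i = length u + j" "j < length v"
        using i le_Suc_ex by (metis add_less_imp_less_left length_append not_less)
      then show ?thesis
        using rs(1) right[of j] right[of "Suc j"] by (simp add: is_run_def nth_append)
    qed
  qed
  moreover have "hd ps = p"
    using left[of 0] is_run_hd_last(1)[OF calculation] is_run_hd_last(1)[OF qs(1)] qs(2) by simp
  moreover have "last ps = r"
    using right[of "length v"] is_run_hd_last(2)[OF calculation(1)] is_run_hd_last(2)[OF rs(1)] rs(3)
    by simp
  moreover have "ps ! length u = q"
    using left[of "length u"] is_run_hd_last(2)[OF qs(1)] qs(3) by simp
  ultimately show ?thesis
    by blast
qed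

lemma reach_states_iff:
  assumes "wf_nfa A" "reach A q w r"
  shows "q \<in> states A \<longleftrightarrow> r \<in> states A"
proof -
  obtain qs where qs: "is_run A qs w" "hd qs = q" "last qs = r"
    using assms(2) by (auto simp: reach_def)
  show ?thesis
  proof (cases "w = []")
    case True
    then show ?thesis
      using qs is_run_hd_last[OF qs(1)] by simp
  next
    case False
    then obtain k where k: "length w = Suc k"
      by (cases w) auto
    then have "(qs ! 0, w ! 0, qs ! 1) \<in> trans A" "(qs ! k, w ! k, qs ! length w) \<in> trans A"
      using qs(1) by (auto simp: is_run_def)
    then show ?thesis
      using assms(1) qs is_run_hd_last[OF qs(1)] by (auto simp: wf_nfa_def)
  qed
qed

lemma fwd_det_states_subset_Pow:
  assumes "wf_nfa A"
  shows "fwd_det_states A \<subseteq> Pow (states A)"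
  using assms reach_states_iff[OF assms]
  by (auto simp: fwd_det_states_def delta_set_def wf_nfa_def)

lemma bwd_det_states_subset_Pow:
  assumes "wf_nfa A"
  shows "bwd_det_states A \<subseteq> Pow (states A)"
  using assms reach_states_iff[OF assms]
  by (auto simp: bwd_det_states_def delta_inv_def wf_nfa_def)

lemma ufa_card_fwd_Int_bwd_le_1:
  assumes "is_ufa A" "X \<in> fwd_det_states A" "Y \<in> bwd_det_states A"
  shows "card (X \<inter> Y) \<le> 1"
proof -
  obtain u v where uv: "u \<in> lists (alphabet A)" "v \<in> lists (alphabet A)"
    and X: "X = delta_set A (init A) u" and Y: "Y = delta_inv A v (final A)"
    using assms(2,3) by (auto simp: fwd_det_states_def bwd_det_states_def)
  have run_through: "\<exists>ps. accepting_run A ps (u @ v) \<and> ps ! length u = q" if q: "q \<in> X \<inter> Y" for q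
  proof -
    obtain p r where "p \<in> init A" "reach A p u q" "r \<in> final A" "reach A q v r"
      using q unfolding X Y delta_set_def delta_inv_def by blast
    then show ?thesis
      using reach_append[of A p u q v r] by (auto simp: accepting_run_def)
  qed
  have "q = q'" if qq': "q \<in> X \<inter> Y" "q' \<in> X \<inter> Y" for q q'
  proof -
    obtain ps ps' where "accepting_run A ps (u @ v)" "ps ! length u = q"
      "accepting_run A ps' (u @ v)" "ps' ! length u = q'"
      using run_through[OF qq'(1)] run_through[OF qq'(2)] by blast
    moreover have "u @ v \<in> lists (alphabet A)"
      using uv by simp
    ultimately have "ps = ps'"
      using assms(1) unfolding is_ufa_def by blast
    then show ?thesis
      using \<open>ps ! length u = q\<close> \<open>ps' ! length u = q'\<close> by simp
  qed
  then show ?thesis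
    by (cases "finite (X \<inter> Y)") (auto simp: card_le_Suc0_iff_eq)
qed

lemma le_or_le_if_mult_le_square:
  fixes a b c :: real
  assumes "a * b \<le> c\<^sup>2" "0 \<le> c"
  shows "a \<le> c \<or> b \<le> c"
proof (rule ccontr)
  assume "\<not> ?thesis"
  then have "c * c < a * b"
    using assms(2) by (intro mult_strict_mono) auto
  then show False
    using assms(1) by (simp add: power2_eq_square)
qed

lemma sqrt_mult_powr_half_squared:
  "(sqrt (real n + 1) * 2 powr (real n / 2))\<^sup>2 = (real n + 1) * 2 ^ n"
proof -
  have "(2 powr (real n / 2))\<^sup>2 = (2::real) ^ n"
    by (simp add: power2_eq_square powr_add[symmetric] powr_realpow)
  then show ?thesis
    by (simp add: power_mult_distrib)
qed

theorem mainTheorem2: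
  fixes A :: "('q, 'a) nfa"
  assumes "is_ufa A"
      and "card (states A) = n"
  shows "real (card (fwd_det_states A)) \<le> sqrt (real n + 1) * 2 powr (real n / 2)
       \<or> real (card (bwd_det_states A)) \<le> sqrt (real n + 1) * 2 powr (real n / 2)"
proof -
  have wf: "wf_nfa A"
    using assms(1) by (simp add: is_ufa_def)
  then have fin: "finite (states A)"
    by (simp add: wf_nfa_def)
  have "\<forall>X\<in>fwd_det_states A. \<forall>Y\<in>bwd_det_states A. card (X \<inter> Y) \<le> 1"
    using ufa_card_fwd_Int_bwd_le_1[OF assms(1)] by blast
  from card_mult_card_le_if_card_Int_le_1
    [OF fin fwd_det_states_subset_Pow[OF wf] bwd_det_states_subset_Pow[OF wf] this]
  have "card (fwd_det_states A) * card (bwd_det_states A) \<le> (n + 1) * 2 ^ n"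
    unfolding assms(2) .
  then have "real (card (fwd_det_states A) * card (bwd_det_states A)) \<le> real ((n + 1) * 2 ^ n)"
    by (rule of_nat_mono)
  then have "real (card (fwd_det_states A)) * real (card (bwd_det_states A))
      \<le> (sqrt (real n + 1) * 2 powr (real n / 2))\<^sup>2"
    unfolding sqrt_mult_powr_half_squared by (simp add: algebra_simps)
  then show ?thesis
    by (rule le_or_le_if_mult_le_square) simp
qed

end
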